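(* For every $0<\epsilon<1$ and every integer $m\ge2$ there exists a scheduling game on $m$ identical machines of speed $1$ with a global priority list, in which every job has negative deterioration $p_i(t)=\max\{\tau_i,b_i-a_it\}$ with $0\le a_i\le1$, having a pure Nash equilibrium $\sigma$ with $C_{\max}(\sigma)\ge\left(3-\frac2m-\epsilon\right)OPT(G)$. Hence the bound $3-\frac2m$ on the price of anarchy of this class is tight.
   Context: Scheduling game: a finite set $N$ of $n$ jobs (players) and a set $M$ of $m$ machines; machine $j$ has speed $s_j>0$. With a global priority list, all machines share the same bijection $\pi:N\to\{1,\dots,n\}$, and job $u$ has higher priority than $v$ iff $\pi(u)<\pi(v)$. Negative deterioration: $p_i(t)=\max\{\tau_i,b_i-a_it\}$ with $b_i,a_i\ge0$, $\tau_i>0$ ($a_i=0$ gives a fixed-length job). A profile $\sigma\in M^N$ assigns each job to a machine. On machine $j$, the jobs assigned to it, listed in increasing $\pi$-order as $i_1,i_2,\dots$, are processed without idle time: $S_{i_1}(\sigma)=0$, $C_{i_k}(\sigma)=S_{i_k}(\sigma)+p_{i_k}(S_{i_k}(\sigma))/s_j$, $S_{i_{k+1}}(\sigma)=C_{i_k}(\sigma)$. The cost of job $i$ is $C_i(\sigma)$. A pure Nash equilibrium (NE) is a profile in which no job can strictly decrease its completion time by unilaterally changing its machine. Makespan $C_{\max}(\sigma)=\max_iC_i(\sigma)$; $OPT(G)=\min_\sigma C_{\max}(\sigma)$ over all profiles. *)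

theory Defs
  imports Complex_Main "HOL-Library.FuncSet"
begin

text \<open>Jobs are 0..<n, machines are 0..<m.
  Job i has processing time p_i(t) = max tau_i (b_i - a_i t).
  pi is the global priority list (a bijection onto 1..n; smaller = higher priority).\<close>

definition ptime :: "(nat \<Rightarrow> real) \<Rightarrow> (nat \<Rightarrow> real) \<Rightarrow> (nat \<Rightarrow> real) \<Rightarrow> nat \<Rightarrow> real \<Rightarrow> real" where
  "ptime \<tau> a b i t = max (\<tau> i) (b i - a i * t)"

definition jobs_before :: "nat \<Rightarrow> (nat \<Rightarrow> nat) \<Rightarrow> (nat \<Rightarrow> nat) \<Rightarrow> nat \<Rightarrow> nat list" where
  "jobs_before n \<pi> \<sigma> i = filter (\<lambda>k. \<sigma> k = \<sigma> i \<and> \<pi> k < \<pi> i) (sort_key \<pi> [0..<n])"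

definition start_time :: "nat \<Rightarrow> (nat \<Rightarrow> real) \<Rightarrow> (nat \<Rightarrow> nat) \<Rightarrow> (nat \<Rightarrow> real) \<Rightarrow> (nat \<Rightarrow> real) \<Rightarrow> (nat \<Rightarrow> real)
    \<Rightarrow> (nat \<Rightarrow> nat) \<Rightarrow> nat \<Rightarrow> real" where
  "start_time n s \<pi> \<tau> a b \<sigma> i =
     foldl (\<lambda>t k. t + ptime \<tau> a b k t / s (\<sigma> i)) 0 (jobs_before n \<pi> \<sigma> i)"

definition compl_time :: "nat \<Rightarrow> (nat \<Rightarrow> real) \<Rightarrow> (nat \<Rightarrow> nat) \<Rightarrow> (nat \<Rightarrow> real) \<Rightarrow> (nat \<Rightarrow> real) \<Rightarrow> (nat \<Rightarrow> real)
    \<Rightarrow> (nat \<Rightarrow> nat) \<Rightarrow> nat \<Rightarrow> real" where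
  "compl_time n s \<pi> \<tau> a b \<sigma> i =
     (let st = start_time n s \<pi> \<tau> a b \<sigma> i in st + ptime \<tau> a b i st / s (\<sigma> i))"

definition is_profile :: "nat \<Rightarrow> nat \<Rightarrow> (nat \<Rightarrow> nat) \<Rightarrow> bool" where
  "is_profile n m \<sigma> \<longleftrightarrow> (\<forall>i<n. \<sigma> i < m)"

definition is_NE :: "nat \<Rightarrow> nat \<Rightarrow> (nat \<Rightarrow> real) \<Rightarrow> (nat \<Rightarrow> nat) \<Rightarrow> (nat \<Rightarrow> real) \<Rightarrow> (nat \<Rightarrow> real) \<Rightarrow> (nat \<Rightarrow> real)
    \<Rightarrow> (nat \<Rightarrow> nat) \<Rightarrow> bool" where
  "is_NE n m s \<pi> \<tau> a b \<sigma> \<longleftrightarrow> is_profile n m \<sigma> \<and>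
     (\<forall>i<n. \<forall>j<m. \<not> compl_time n s \<pi> \<tau> a b (\<sigma>(i := j)) i < compl_time n s \<pi> \<tau> a b \<sigma> i)"

definition Cmax :: "nat \<Rightarrow> (nat \<Rightarrow> real) \<Rightarrow> (nat \<Rightarrow> nat) \<Rightarrow> (nat \<Rightarrow> real) \<Rightarrow> (nat \<Rightarrow> real) \<Rightarrow> (nat \<Rightarrow> real)
    \<Rightarrow> (nat \<Rightarrow> nat) \<Rightarrow> real" where
  "Cmax n s \<pi> \<tau> a b \<sigma> = Max ((compl_time n s \<pi> \<tau> a b \<sigma>) ` {..<n})"

text \<open>Optimal makespan over all profiles (profiles restricted to jobs, as extensional functions).\<close>
definition OPT :: "nat \<Rightarrow> nat \<Rightarrow> (nat \<Rightarrow> real) \<Rightarrow> (nat \<Rightarrow> nat) \<Rightarrow> (nat \<Rightarrow> real) \<Rightarrow> (nat \<Rightarrow> real) \<Rightarrow> (nat \<Rightarrow> real) \<Rightarrow> real" where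
  "OPT n m s \<pi> \<tau> a b = Min ((Cmax n s \<pi> \<tau> a b) ` ({..<n} \<rightarrow>\<^sub>E {..<m}))"

end

theory Submission
  imports Defs
begin

(* Jobs 0, ..., m(m-1) are processed in index order (priority Suc). Job 0 and the last job
   m(m-1) have length 1, jobs 1, ..., m-1 have p(t) = max delta (1 - t), and the m(m-2) jobs in
   between have length 1/m. Dealing the jobs round robin (job i to machine i mod m) sends every job
   to a least loaded machine, which is an equilibrium because t + p_i(t) is nondecreasing in t when
   a_i <= 1; the small jobs raise every machine from 1 to 2 - 2/m, so the last job finishes at
   3 - 2/m. Cutting the list into blocks of m (job i to machine i div m) instead starts the
   deteriorating jobs after job 0, when each of them takes only delta, so OPT <= 1 + (m-1) delta,
   and delta -> 0 gives the ratio 3 - 2/m. *)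

definition finish_time :: "(nat \<Rightarrow> real) \<Rightarrow> (nat \<Rightarrow> real) \<Rightarrow> (nat \<Rightarrow> real) \<Rightarrow> real \<Rightarrow> nat \<Rightarrow> real" where
  "finish_time \<tau> a b t k = t + ptime \<tau> a b k t"

definition machine_load :: "(nat \<Rightarrow> real) \<Rightarrow> (nat \<Rightarrow> real) \<Rightarrow> (nat \<Rightarrow> real) \<Rightarrow> (nat \<Rightarrow> nat) \<Rightarrow> nat \<Rightarrow> nat \<Rightarrow> real" where
  "machine_load \<tau> a b \<sigma> j i = foldl (finish_time \<tau> a b) 0 (filter (\<lambda>k. \<sigma> k = j) [0..<i])"

lemma machine_load_0 [simp]: "machine_load \<tau> a b \<sigma> j 0 = 0"
  by (simp add: machine_load_def)

lemma machine_load_Suc: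
  "machine_load \<tau> a b \<sigma> j (Suc i) =
     (if \<sigma> i = j then finish_time \<tau> a b (machine_load \<tau> a b \<sigma> j i) i else machine_load \<tau> a b \<sigma> j i)"
  by (simp add: machine_load_def)

lemma machine_load_fun_upd: "i' \<le> i \<Longrightarrow> machine_load \<tau> a b (\<sigma>(i := j')) j i' = machine_load \<tau> a b \<sigma> j i'"
  by (induction i') (auto simp: machine_load_Suc)

lemma finish_time_fixed: "a k = 0 \<Longrightarrow> b k \<le> \<tau> k \<Longrightarrow> finish_time \<tau> a b t k = t + \<tau> k"
  by (simp add: finish_time_def ptime_def)

lemma finish_time_mono:
  assumes "a k \<le> 1" and "t \<le> t'"
  shows "finish_time \<tau> a b t k \<le> finish_time \<tau> a b t' k"
proof -
  have "b k - a k * t \<le> (t' - t) + (b k - a k * t')"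
    using mult_right_mono[OF assms(1), of "t' - t"] assms(2) by (simp add: algebra_simps)
  then show ?thesis
    using assms(2) by (auto simp: finish_time_def ptime_def)
qed

lemma machine_load_fixed_jobs:
  assumes "i\<^sub>0 \<le> i" and "\<And>k. i\<^sub>0 \<le> k \<Longrightarrow> k < i \<Longrightarrow> \<sigma> k = j \<Longrightarrow> a k = 0 \<and> b k \<le> \<tau> k"
  shows "machine_load \<tau> a b \<sigma> j i = machine_load \<tau> a b \<sigma> j i\<^sub>0 + (\<Sum>k | i\<^sub>0 \<le> k \<and> k < i \<and> \<sigma> k = j. \<tau> k)"
  using assms
proof (induction i rule: dec_induct)
  case base
  then show ?case by (auto intro!: sum.neutral)
next
  case (step i)
  have "{k. i\<^sub>0 \<le> k \<and> k < Suc i \<and> \<sigma> k = j} =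
      (if \<sigma> i = j then insert i else id) {k. i\<^sub>0 \<le> k \<and> k < i \<and> \<sigma> k = j}"
    using step.hyps(1) by (auto simp: less_Suc_eq)
  then show ?case
    using step by (auto simp: machine_load_Suc finish_time_fixed)
qed

lemma compl_time_identity_priority:
  assumes "i < n"
  shows "compl_time n (\<lambda>_. 1) Suc \<tau> a b \<sigma> i = finish_time \<tau> a b (machine_load \<tau> a b \<sigma> (\<sigma> i) i) i"
proof -
  have sorted: "sort_key Suc [0..<n] = [0..<n]"
    by (rule sort_key_id_if_sorted) (simp add: sorted_map)
  have "[0..<n] = [0..<i] @ [i..<n]"
    using assms upt_add_eq_append[of 0 i "n - i"] by simp
  then have before: "filter (\<lambda>k. P k \<and> Suc k < Suc i) [0..<n] = filter P [0..<i]" for P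
    by (auto intro!: filter_cong)
  have step: "(\<lambda>t k. t + ptime \<tau> a b k t / 1) = finish_time \<tau> a b"
    by (auto simp: finish_time_def fun_eq_iff)
  have "start_time n (\<lambda>_. 1) Suc \<tau> a b \<sigma> i = machine_load \<tau> a b \<sigma> (\<sigma> i) i"
    unfolding start_time_def jobs_before_def sorted before machine_load_def step ..
  then show ?thesis
    by (simp add: compl_time_def finish_time_def Let_def)
qed

lemma compl_time_identity_priority_fun_upd:
  "i < n \<Longrightarrow> compl_time n (\<lambda>_. 1) Suc \<tau> a b (\<sigma>(i := j)) i = finish_time \<tau> a b (machine_load \<tau> a b \<sigma> j i) i"
  by (simp add: compl_time_identity_priority machine_load_fun_upd)

lemma compl_time_identity_priority_eq_machine_load:
  "i < n \<Longrightarrow> compl_time n (\<lambda>_. 1) Suc \<tau> a b \<sigma> i = machine_load \<tau> a b \<sigma> (\<sigma> i) (Suc i)"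
  by (simp add: compl_time_identity_priority machine_load_Suc)

lemma is_NE_if_least_loaded:
  assumes "is_profile n m \<sigma>" and "\<And>i. i < n \<Longrightarrow> a i \<le> 1"
    and "\<And>i j. i < n \<Longrightarrow> j < m \<Longrightarrow> machine_load \<tau> a b \<sigma> (\<sigma> i) i \<le> machine_load \<tau> a b \<sigma> j i"
  shows "is_NE n m (\<lambda>_. 1) Suc \<tau> a b \<sigma>"
  unfolding is_NE_def
proof (intro conjI allI impI)
  fix i j assume "i < n" "j < m"
  then show "\<not> compl_time n (\<lambda>_. 1) Suc \<tau> a b (\<sigma>(i := j)) i < compl_time n (\<lambda>_. 1) Suc \<tau> a b \<sigma> i"
    using assms
    by (simp add: compl_time_identity_priority_fun_upd compl_time_identity_priority[of i n]
        finish_time_mono not_less)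
qed (use assms in simp)

lemma compl_time_le_Cmax: "i < n \<Longrightarrow> compl_time n s \<pi> \<tau> a b \<sigma> i \<le> Cmax n s \<pi> \<tau> a b \<sigma>"
  unfolding Cmax_def by (rule Max_ge) auto

lemma Cmax_le: "0 < n \<Longrightarrow> (\<And>i. i < n \<Longrightarrow> compl_time n s \<pi> \<tau> a b \<sigma> i \<le> c) \<Longrightarrow> Cmax n s \<pi> \<tau> a b \<sigma> \<le> c"
  unfolding Cmax_def by (rule Max.boundedI) auto

lemma compl_time_cong:
  assumes "\<And>k. k < n \<Longrightarrow> \<sigma> k = \<sigma>' k" and "i < n"
  shows "compl_time n s \<pi> \<tau> a b \<sigma> i = compl_time n s \<pi> \<tau> a b \<sigma>' i"
proof -
  have "jobs_before n \<pi> \<sigma> i = jobs_before n \<pi> \<sigma>' i"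
    unfolding jobs_before_def using assms by (intro filter_cong) auto
  then show ?thesis
    using assms by (simp add: compl_time_def start_time_def)
qed

lemma OPT_le_Cmax:
  assumes "is_profile n m \<sigma>"
  shows "OPT n m s \<pi> \<tau> a b \<le> Cmax n s \<pi> \<tau> a b \<sigma>"
proof -
  have "restrict \<sigma> {..<n} \<in> {..<n} \<rightarrow>\<^sub>E {..<m}"
    using assms by (auto simp: is_profile_def)
  moreover have "Cmax n s \<pi> \<tau> a b (restrict \<sigma> {..<n}) = Cmax n s \<pi> \<tau> a b \<sigma>"
    unfolding Cmax_def by (intro arg_cong[where f = Max] image_cong refl compl_time_cong) auto
  ultimately show ?thesis
    unfolding OPT_def by (metis Min_le finite_PiE finite_imageI finite_lessThan image_eqI)
qed

lemma card_less_mod_eq: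
  fixes i j m :: nat
  assumes "j < m"
  shows "card {k. k < i \<and> k mod m = j} = i div m + of_bool (j < i mod m)"
proof (induction i)
  case 0
  show ?case by simp
next
  case (Suc i)
  have "{k. k < Suc i \<and> k mod m = j} =
      (if i mod m = j then insert i else id) {k. k < i \<and> k mod m = j}"
    by (auto simp: less_Suc_eq)
  then have "card {k. k < Suc i \<and> k mod m = j} = i div m + of_bool (j < i mod m) + of_bool (i mod m = j)"
    by (simp add: Suc.IH)
  also have "\<dots> = Suc i div m + of_bool (j < Suc i mod m)"
    using assms by (auto simp: div_Suc mod_Suc)
  finally show ?case .
qed

lemma card_less_div_eq_le:
  fixes i q m :: nat
  assumes "0 < m"
  shows "card {k. k < i \<and> k div m = q} \<le> m"
proof -
  have "{k. k < i \<and> k div m = q} \<subseteq> {q * m..<q * m + m}"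
  proof
    fix k assume "k \<in> {k. k < i \<and> k div m = q}"
    then have "k div m = q" by simp
    then show "k \<in> {q * m..<q * m + m}"
      using dividend_less_div_times[OF assms, of k] div_times_less_eq_dividend[of k m] by simp
  qed
  then show ?thesis
    using card_mono[of "{q * m..<q * m + m}"] by simp
qed

locale tight_instance =
  fixes m :: nat and \<delta> :: real
  assumes two_le_m: "2 \<le> m" and \<delta>_pos: "0 < \<delta>" and \<delta>_le_1: "\<delta> \<le> 1"
begin

definition last_job :: nat where
  "last_job = m * (m - 1)"

definition tau :: "nat \<Rightarrow> real" where
  "tau i = (if 0 < i \<and> i < m then \<delta> else if m \<le> i \<and> i < last_job then 1 / m else 1)"

(* Used both as a and as b, so p_i(t) = max delta (1 - t) on jobs 1..m-1 and p_i(t) = tau i elsewhere. *)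
definition deteriorating :: "nat \<Rightarrow> real" where
  "deteriorating i = of_bool (0 < i \<and> i < m)"

abbreviation load :: "(nat \<Rightarrow> nat) \<Rightarrow> nat \<Rightarrow> nat \<Rightarrow> real" where
  "load \<equiv> machine_load tau deteriorating deteriorating"

abbreviation compl :: "(nat \<Rightarrow> nat) \<Rightarrow> nat \<Rightarrow> real" where
  "compl \<equiv> compl_time (Suc last_job) (\<lambda>_. 1) Suc tau deteriorating deteriorating"

abbreviation makespan :: "(nat \<Rightarrow> nat) \<Rightarrow> real" where
  "makespan \<equiv> Cmax (Suc last_job) (\<lambda>_. 1) Suc tau deteriorating deteriorating"

lemma parameters_valid:
  "tau i > 0 \<and> 0 \<le> deteriorating i \<and> deteriorating i \<le> 1"
  using \<delta>_pos two_le_m by (simp add: tau_def deteriorating_def)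

lemma finish_time_deteriorating:
  "0 < i \<Longrightarrow> i < m \<Longrightarrow> finish_time tau deteriorating deteriorating t i = t + max \<delta> (1 - t)"
  by (simp add: finish_time_def ptime_def tau_def deteriorating_def)

lemma finish_time_not_deteriorating:
  "\<not> (0 < i \<and> i < m) \<Longrightarrow> finish_time tau deteriorating deteriorating t i = t + tau i"
  using parameters_valid by (intro finish_time_fixed) (auto simp: deteriorating_def less_imp_le)

lemma last_job_div: "last_job div m = m - 1"
  and last_job_mod: "last_job mod m = 0"
  and m_le_last_job: "m \<le> last_job"
  using two_le_m by (auto simp: last_job_def)

lemma finish_time_unit_job:
  "i = 0 \<or> i = last_job \<Longrightarrow> finish_time tau deteriorating deteriorating t i = t + 1"
  using m_le_last_job two_le_m by (subst finish_time_not_deteriorating) (auto simp: tau_def)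

lemma load_round_robin_initial:
  "i \<le> m \<Longrightarrow> j < m \<Longrightarrow> load (\<lambda>k. k mod m) j i = of_bool (j < i)"
proof (induction i arbitrary: j)
  case 0
  then show ?case by simp
next
  case (Suc i)
  then have "i < m" by simp
  then have "load (\<lambda>k. k mod m) i i = 0" and "i mod m = i"
    using Suc.IH by simp_all
  moreover have "finish_time tau deteriorating deteriorating 0 i = 1"
    using \<delta>_le_1 two_le_m \<open>i < m\<close>
    by (cases "i = 0") (simp_all add: finish_time_deteriorating finish_time_unit_job)
  ultimately show ?case
    using Suc by (auto simp: machine_load_Suc)
qed

lemma load_round_robin:
  assumes "m \<le> i" and "i \<le> last_job" and "j < m"
  shows "load (\<lambda>k. k mod m) j i = 1 + real (i div m - 1 + of_bool (j < i mod m)) / m"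
proof -
  let ?later = "{k. m \<le> k \<and> k < i \<and> k mod m = j}"
  have later: "{k. k < i \<and> k mod m = j} = insert j ?later"
    using assms by (auto, metis mod_less not_le)
  have "finite ?later"
    by (rule finite_subset[of _ "{..<i}"]) auto
  then have "i div m + of_bool (j < i mod m) = Suc (card ?later)"
    using card_less_mod_eq[OF \<open>j < m\<close>, of i] assms unfolding later by simp
  moreover have "1 \<le> i div m"
    using assms two_le_m div_le_mono[of m i m] by simp
  ultimately have card_later: "card ?later = i div m - 1 + of_bool (j < i mod m)"
    by linarith
  have "load (\<lambda>k. k mod m) j i = load (\<lambda>k. k mod m) j m + (\<Sum>k\<in>?later. tau k)"
    using assms parameters_valid by (intro machine_load_fixed_jobs) (auto simp: deteriorating_def less_imp_le)
  also have "load (\<lambda>k. k mod m) j m = 1"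
    using load_round_robin_initial[of m j] assms by simp
  also have "(\<Sum>k\<in>?later. tau k) = (\<Sum>k\<in>?later. 1 / m)"
    using assms by (intro sum.cong) (auto simp: tau_def)
  also have "\<dots> = real (card ?later) / m"
    by simp
  finally show ?thesis
    by (simp only: card_later)
qed

lemma round_robin_is_NE:
  "is_NE (Suc last_job) m (\<lambda>_. 1) Suc tau deteriorating deteriorating (\<lambda>k. k mod m)"
proof (rule is_NE_if_least_loaded)
  show "is_profile (Suc last_job) m (\<lambda>k. k mod m)"
    using two_le_m by (simp add: is_profile_def)
  show "deteriorating i \<le> 1" for i
    using parameters_valid by blast
  fix i j assume "i < Suc last_job" and "j < m"
  show "load (\<lambda>k. k mod m) (i mod m) i \<le> load (\<lambda>k. k mod m) j i"
  proof (cases "i < m")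
    case True
    then show ?thesis
      using load_round_robin_initial[of i] \<open>j < m\<close> by simp
  next
    case False
    then show ?thesis
      using load_round_robin[of i] \<open>i < Suc last_job\<close> \<open>j < m\<close> two_le_m
      by (simp add: divide_right_mono)
  qed
qed

lemma round_robin_makespan: "3 - 2 / m \<le> makespan (\<lambda>k. k mod m)"
proof -
  have "load (\<lambda>k. k mod m) 0 last_job = 1 + real (m - 2) / m"
    using load_round_robin[OF m_le_last_job order_refl] two_le_m
    by (simp add: last_job_div last_job_mod numeral_2_eq_2)
  have "3 - 2 / m = 2 + real (m - 2) / m"
    using two_le_m by (simp add: of_nat_diff field_simps)
  also have "\<dots> = compl (\<lambda>k. k mod m) last_job"
    using \<open>load (\<lambda>k. k mod m) 0 last_job = 1 + real (m - 2) / m\<close>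
    by (simp add: compl_time_identity_priority last_job_mod finish_time_unit_job)
  also have "\<dots> \<le> makespan (\<lambda>k. k mod m)"
    by (rule compl_time_le_Cmax) simp
  finally show ?thesis .
qed

lemma load_blocks_first_machine: "i < m \<Longrightarrow> load (\<lambda>k. k div m) 0 (Suc i) = 1 + i * \<delta>"
proof (induction i)
  case 0
  then show ?case
    by (simp add: machine_load_Suc finish_time_unit_job)
next
  case (Suc i)
  then have "load (\<lambda>k. k div m) 0 (Suc (Suc i)) = 1 + i * \<delta> + max \<delta> (1 - (1 + i * \<delta>))"
    by (simp add: machine_load_Suc finish_time_deteriorating)
  also have "\<dots> = 1 + Suc i * \<delta>"
  proof -
    have "0 \<le> i * \<delta>"
      using \<delta>_pos by simp
    then have "max \<delta> (1 - (1 + i * \<delta>)) = \<delta>"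
      using \<delta>_pos by (intro max_absorb1) linarith
    then show ?thesis
      by (simp add: algebra_simps)
  qed
  finally show ?case .
qed

lemma load_blocks:
  assumes "0 < q"
  shows "load (\<lambda>k. k div m) q i = (\<Sum>k | k < i \<and> k div m = q. tau k)"
proof -
  have "m \<le> k" if "k div m = q" for k
    using that assms by (metis div_less not_le less_irrefl)
  then have "load (\<lambda>k. k div m) q i = load (\<lambda>k. k div m) q 0 + (\<Sum>k | 0 \<le> k \<and> k < i \<and> k div m = q. tau k)"
    using assms parameters_valid by (intro machine_load_fixed_jobs) (auto simp: deteriorating_def less_imp_le)
  then show ?thesis
    by simp
qed

lemma blocks_is_profile: "is_profile (Suc last_job) m (\<lambda>k. k div m)"
proof -
  have "i div m < m" if "i \<le> last_job" for i
    using div_le_mono[OF that, of m] two_le_m by (simp add: last_job_div)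
  then show ?thesis
    by (simp add: is_profile_def)
qed

lemma compl_time_blocks_le:
  assumes "i < Suc last_job"
  shows "compl (\<lambda>k. k div m) i \<le> 1 + (m - 1) * \<delta>"
proof -
  have compl_eq: "compl (\<lambda>k. k div m) i = load (\<lambda>k. k div m) (i div m) (Suc i)"
    using assms by (rule compl_time_identity_priority_eq_machine_load)
  have "m \<le> k" if "0 < k div m" for k
    using that by (metis div_less not_le less_irrefl)
  consider "i < m" | "m \<le> i" "i < last_job" | "i = last_job"
    using assms by linarith
  then show ?thesis
  proof cases
    case 1
    then have "real i * \<delta> \<le> real (m - 1) * \<delta>"
      using \<delta>_pos by (intro mult_right_mono) auto
    then show ?thesis
      using 1 by (simp add: compl_eq load_blocks_first_machine)
  next
    case 2
    let ?block = "{k. k < Suc i \<and> k div m = i div m}"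
    have "0 < i div m"
      using 2 two_le_m by (simp add: div_greater_zero_iff)
    then have "compl (\<lambda>k. k div m) i = (\<Sum>k\<in>?block. tau k)"
      by (simp add: compl_eq load_blocks)
    also have "\<dots> = (\<Sum>k\<in>?block. 1 / m)"
      using 2 \<open>0 < i div m\<close> \<open>\<And>k. 0 < k div m \<Longrightarrow> m \<le> k\<close>
      by (intro sum.cong) (auto simp: tau_def)
    also have "\<dots> \<le> 1"
      using card_less_div_eq_le[of m "Suc i" "i div m"] two_le_m by (simp add: divide_le_eq_1)
    also have "1 \<le> 1 + (m - 1) * \<delta>"
      using \<delta>_pos by simp
    finally show ?thesis .
  next
    case 3
    have "k = last_job" if "k \<le> last_job" and "k div m = m - 1" for k
      using that div_times_less_eq_dividend[of k m] by (simp add: last_job_def mult.commute)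
    then have block: "{k. k < Suc last_job \<and> k div m = m - 1} = {last_job}"
      by (auto simp: last_job_div)
    have "compl (\<lambda>k. k div m) i = load (\<lambda>k. k div m) (m - 1) (Suc last_job)"
      using compl_eq 3 by (simp add: last_job_div)
    also have "\<dots> = (\<Sum>k | k < Suc last_job \<and> k div m = m - 1. tau k)"
      using two_le_m by (intro load_blocks) simp
    also have "\<dots> = 1"
      using m_le_last_job unfolding block by (simp add: tau_def)
    finally have "compl (\<lambda>k. k div m) i = 1" .
    then show ?thesis
      using \<delta>_pos by simp
  qed
qed

lemma OPT_le: "OPT (Suc last_job) m (\<lambda>_. 1) Suc tau deteriorating deteriorating \<le> 1 + (m - 1) * \<delta>"
  using OPT_le_Cmax[OF blocks_is_profile] Cmax_le[OF zero_less_Suc compl_time_blocks_le] by (rule order_trans)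

lemma round_robin_ratio:
  assumes "0 \<le> c" and "c * (1 + (m - 1) * \<delta>) \<le> 3 - 2 / m"
  shows "c * OPT (Suc last_job) m (\<lambda>_. 1) Suc tau deteriorating deteriorating \<le> makespan (\<lambda>k. k mod m)"
  using mult_left_mono[OF OPT_le assms(1)] assms(2) round_robin_makespan by linarith

end

lemma tight_instance_epsilon:
  assumes "0 < \<epsilon>" and "\<epsilon> < 1" and "2 \<le> m"
  shows "tight_instance m (\<epsilon> / (3 * real m))"
proof
  have "\<epsilon> * m < (1::real) * m"
    using assms by (intro mult_strict_right_mono) auto
  then show "\<epsilon> / (3 * real m) \<le> 1"
    using assms by (simp add: field_simps)
qed (use assms in auto)

lemma epsilon_ratio_le:
  fixes \<epsilon> :: real and m :: nat
  assumes "0 < \<epsilon>" and "\<epsilon> < 1" and "2 \<le> m"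
  shows "(3 - 2 / m - \<epsilon>) * (1 + (m - 1) * (\<epsilon> / (3 * real m))) \<le> 3 - 2 / m"
proof -
  let ?c = "3 - 2 / m - \<epsilon>" and ?x = "(m - 1) * (\<epsilon> / (3 * real m))"
  have "0 \<le> ?x" and "?x \<le> \<epsilon> / 3"
    using assms by (auto simp: field_simps)
  moreover have "?c \<le> 3"
    using assms divide_nonneg_nonneg[of 2 "real m"] by linarith
  ultimately have "?c * ?x \<le> 3 * ?x"
    by (intro mult_right_mono)
  then show ?thesis
    using \<open>?x \<le> \<epsilon> / 3\<close> by (simp add: distrib_left)
qed

theorem theorem15:
  fixes \<epsilon> :: real and m :: nat
  assumes "0 < \<epsilon>" and "\<epsilon> < 1" and "m \<ge> 2"
  shows "\<exists>(n::nat) (\<pi>::nat \<Rightarrow> nat) (\<tau>::nat \<Rightarrow> real) (a::nat \<Rightarrow> real) (b::nat \<Rightarrow> real) (\<sigma>::nat \<Rightarrow> nat).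
           n \<ge> 1 \<and> bij_betw \<pi> {..<n} {1..n} \<and>
           (\<forall>i<n. \<tau> i > 0 \<and> 0 \<le> a i \<and> a i \<le> 1 \<and> b i \<ge> 0) \<and>
           is_NE n m (\<lambda>_. 1) \<pi> \<tau> a b \<sigma> \<and>
           Cmax n (\<lambda>_. 1) \<pi> \<tau> a b \<sigma> \<ge> (3 - 2 / real m - \<epsilon>) * OPT n m (\<lambda>_. 1) \<pi> \<tau> a b"
proof -
  define \<delta> where "\<delta> = \<epsilon> / (3 * real m)"
  interpret tight_instance m \<delta>
    unfolding \<delta>_def using assms by (rule tight_instance_epsilon)
  have "2 / m \<le> 1"
    using assms by simp
  then have "0 \<le> 3 - 2 / m - \<epsilon>"
    using assms by linarith
  then have "(3 - 2 / m - \<epsilon>) * OPT (Suc last_job) m (\<lambda>_. 1) Suc tau deteriorating deteriorating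
      \<le> makespan (\<lambda>k. k mod m)"
    using epsilon_ratio_le[OF assms, folded \<delta>_def] by (rule round_robin_ratio)
  then show ?thesis
    using round_robin_is_NE parameters_valid
    by (intro exI[of _ "Suc last_job"] exI[of _ Suc] exI[of _ tau] exI[of _ deteriorating]
        exI[of _ "\<lambda>k. k mod m"]) (auto simp: image_Suc_lessThan)
qed

end
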